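(* Let $\Omega\subset\mathbb{R}^d$ be a compact set with positive volume whose boundary has Lebesgue measure zero; let $\omega:\Omega\to[0,\infty)$ be Riemann integrable with nowhere dense zero set; let $\mathcal{F}_K(\Omega)$ be a $K$-dimensional space of continuous real functions on $\Omega$ containing the constants, such that $I[f]=\int_\Omega\omega f\,\mathrm{d}\boldsymbol{x}$ is positive definite on $\mathcal{F}_K(\Omega)$. Let $(\mathbf{x}_n)_{n\in\mathbb{N}}\subset\Omega$ be equidistributed in $\Omega$ (i.e. $\lim_{N\to\infty}\frac{|\Omega|}{N}\sum_{n=1}^Ng(\mathbf{x}_n)=\int_\Omega g$ for every bounded measurable $g$ continuous almost everywhere). Then there exist $N\in\mathbb{N}$, $M\le K$, points $\mathbf{y}_1,\dots,\mathbf{y}_M\in\{\mathbf{x}_1,\dots,\mathbf{x}_N\}\subset\Omega$ and weights $\lambda_1,\dots,\lambda_M>0$ such that $\sum_{j=1}^M\lambda_jf(\mathbf{y}_j)=I[f]$ for all $f\in\mathcal{F}_K(\Omega)$. *)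

theory Defs
  imports "HOL-Analysis.Analysis"
begin

text \<open>Riemann integrability of f over a bounded set S, by the literal definition:
  the zero extension of f to a box containing S has convergent Riemann sums
  (tagged divisions fine w.r.t. a constant gauge of radius delta).\<close>
definition riemann_integrable_on :: "('a::euclidean_space \<Rightarrow> real) \<Rightarrow> 'a set \<Rightarrow> bool" where
  "riemann_integrable_on f S \<longleftrightarrow>
     (\<exists>a b I. S \<subseteq> cbox a b \<and>
        (\<forall>e>0. \<exists>\<delta>>0. \<forall>D. D tagged_division_of cbox a b \<and> (\<lambda>x. ball x \<delta>) fine D \<longrightarrow>
            \<bar>(\<Sum>(x,K)\<in>D. Henstock_Kurzweil_Integration.content K * (if x \<in> S then f x else 0)) - I\<bar> < e))"

text \<open>Functions on \<Omega>
  are represented by functions on the whole space, identified when they agree on \<Omega>;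
  F is the set of all functions agreeing on \<Omega> with a linear combination of K functions
  that are continuous on \<Omega> and linearly independent as functions on \<Omega>.\<close>
definition fun_space_on :: "'a::topological_space set \<Rightarrow> nat \<Rightarrow> ('a \<Rightarrow> real) set \<Rightarrow> bool" where
  "fun_space_on \<Omega> K F \<longleftrightarrow>
     (\<exists>\<phi>::nat \<Rightarrow> 'a \<Rightarrow> real.
        (\<forall>i<K. continuous_on \<Omega> (\<phi> i)) \<and>
        (\<forall>c. (\<forall>x\<in>\<Omega>. (\<Sum>i<K. c i * \<phi> i x) = 0) \<longrightarrow> (\<forall>i<K. c i = 0)) \<and>
        F = {f. \<exists>c. \<forall>x\<in>\<Omega>. f x = (\<Sum>i<K. c i * \<phi> i x)})"

definition equidistributed_in :: "(nat \<Rightarrow> 'a::euclidean_space) \<Rightarrow> 'a set \<Rightarrow> bool" where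
  "equidistributed_in x \<Omega> \<longleftrightarrow>
     (\<forall>n. x n \<in> \<Omega>) \<and>
     (\<forall>g::'a \<Rightarrow> real. bounded (g ` \<Omega>) \<and> g \<in> borel_measurable (lebesgue_on \<Omega>) \<and>
        (AE t in lebesgue. t \<in> \<Omega> \<longrightarrow> continuous (at t within \<Omega>) g) \<longrightarrow>
        (\<lambda>N. measure lebesgue \<Omega> / real N * (\<Sum>n=1..N. g (x n))) \<longlonglongrightarrow> integral \<Omega> g)"

end

theory Submission
  imports Defs
begin

(* Let U be the interior of \<Omega> and m the vector of moments m i = I[\<phi> i] of a basis \<phi> of F.
   Equidistribution makes the sample points dense in U, so a combination f = \<Sum> c i \<phi> i that is
   nonnegative at all sample points is nonnegative on U; if moreover I[f] = \<Sum> c i m i \<le> 0, then f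
   vanishes on U, since \<omega> is positive on a dense open subset of U.  Thus no unit vector c separates m
   from all sample points, and by Farkas' lemma and compactness of the unit sphere m already lies in
   the cone spanned by the evaluations of \<phi> at the first N sample points, for some N (basis functions
   that are linearly dependent on U are discarded first).  Caratheodory's theorem for cones cuts this
   representation down to at most K points with positive weights, which is the quadrature rule. *)

lemma sum_mult_diff_scaled_right:
  "(\<Sum>i\<in>I. z i * (v i - c * u i)) = (\<Sum>i\<in>I. z i * v i) - c * (\<Sum>i\<in>I. z i * (u i :: real))"
  by (simp add: algebra_simps sum_subtractf sum_distrib_left)

lemma sum_mult_diff_scaled_left:
  "(\<Sum>i\<in>I. (z i - c * y i) * v i) = (\<Sum>i\<in>I. z i * v i) - c * (\<Sum>i\<in>I. y i * (v i :: real))"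
  by (simp add: algebra_simps sum_subtractf sum_distrib_left)

lemma cone_membership_lift:
  fixes a :: "'t \<Rightarrow> 'i \<Rightarrow> real" and b :: "'i \<Rightarrow> real" and \<mu> Y :: "'t \<Rightarrow> real"
  assumes "finite S" "s \<notin> S" "p < 0" "B < 0" "\<forall>t\<in>S. Y t \<ge> 0" "\<forall>t\<in>S. \<mu> t \<ge> 0"
    and rep: "\<forall>i\<in>I. b i - B / p * a s i = (\<Sum>t\<in>S. \<mu> t * (a t i - Y t / p * a s i))"
  shows "\<exists>l. (\<forall>t\<in>insert s S. l t \<ge> 0) \<and> (\<forall>i\<in>I. b i = (\<Sum>t\<in>insert s S. l t * a t i))"
proof -
  define c where "c = (B - (\<Sum>t\<in>S. \<mu> t * Y t)) / p"
  have "(\<Sum>t\<in>S. \<mu> t * Y t) \<ge> 0"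
    using assms(5,6) by (intro sum_nonneg) auto
  then have "c > 0"
    using assms(3,4) unfolding c_def by (intro divide_neg_neg) auto
  moreover have "b i = c * a s i + (\<Sum>t\<in>S. \<mu> t * a t i)" if "i \<in> I" for i
  proof -
    have "(\<Sum>t\<in>S. \<mu> t * (a t i - Y t / p * a s i))
        = (\<Sum>t\<in>S. \<mu> t * a t i) - (\<Sum>t\<in>S. \<mu> t * Y t) / p * a s i"
      by (simp add: algebra_simps sum_subtractf sum_distrib_left sum_divide_distrib)
    then show ?thesis
      using rep that \<open>p < 0\<close> unfolding c_def by (simp add: field_simps)
  qed
  ultimately show ?thesis
    using assms(1,2,6)
    by (intro exI[of _ "\<mu>(s := c)"]) (auto simp: less_imp_le intro!: sum.cong)
qed

lemma separator_lift:
  fixes a :: "'t \<Rightarrow> 'i \<Rightarrow> real" and b y z :: "'i \<Rightarrow> real"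
  assumes "p \<noteq> 0" "p = (\<Sum>i\<in>I. y i * a s i)"
    and z_S: "\<forall>t\<in>S. (\<Sum>i\<in>I. z i * (a t i - (\<Sum>j\<in>I. y j * a t j) / p * a s i)) \<ge> 0"
    and z_b: "(\<Sum>i\<in>I. z i * (b i - (\<Sum>j\<in>I. y j * b j) / p * a s i)) < 0"
  shows "\<exists>w. (\<forall>t\<in>insert s S. (\<Sum>i\<in>I. w i * a t i) \<ge> 0) \<and> (\<Sum>i\<in>I. w i * b i) < 0"
proof -
  define w where "w i = z i - (\<Sum>j\<in>I. z j * a s j) / p * y i" for i
  have adjoint: "(\<Sum>i\<in>I. w i * v i) = (\<Sum>i\<in>I. z i * (v i - (\<Sum>j\<in>I. y j * v j) / p * a s i))" for v
    unfolding w_def sum_mult_diff_scaled_left sum_mult_diff_scaled_right by (simp add: ac_simps)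
  have "(\<Sum>i\<in>I. w i * a s i) = 0"
    unfolding adjoint sum_mult_diff_scaled_right using assms(1,2) by simp
  then show ?thesis
    using z_S z_b by (intro exI[of _ w]) (auto simp: adjoint)
qed

theorem farkas_alternative:
  fixes a :: "'t \<Rightarrow> 'i \<Rightarrow> real" and b :: "'i \<Rightarrow> real"
  assumes "finite S" "finite I"
  shows "(\<exists>l. (\<forall>t\<in>S. l t \<ge> 0) \<and> (\<forall>i\<in>I. b i = (\<Sum>t\<in>S. l t * a t i))) \<or>
         (\<exists>y. (\<forall>t\<in>S. (\<Sum>i\<in>I. y i * a t i) \<ge> 0) \<and> (\<Sum>i\<in>I. y i * b i) < 0)"
  using assms(1)
proof (induction S arbitrary: a b rule: finite_induct)
  case empty
  show ?case
  proof (cases "\<forall>i\<in>I. b i = 0")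
    case False
    then obtain i0 where "i0 \<in> I" "b i0 \<noteq> 0" by blast
    then have "(\<Sum>i\<in>I. b i * b i) > 0"
      using assms(2) by (intro sum_pos2[of I i0]) (auto simp: zero_less_mult_iff linorder_neq_iff)
    then show ?thesis
      by (intro disjI2 exI[of _ "\<lambda>i. - b i"]) (simp add: sum_negf)
  qed auto
next
  case (insert s S)
  from insert.IH[where a=a and b=b]
  consider (cone) l where "\<forall>t\<in>S. l t \<ge> 0" "\<forall>i\<in>I. b i = (\<Sum>t\<in>S. l t * a t i)"
    | (separated) y where "\<forall>t\<in>S. (\<Sum>i\<in>I. y i * a t i) \<ge> 0" "(\<Sum>i\<in>I. y i * b i) < 0"
    by blast
  then show ?case
  proof cases
    case cone
    then show ?thesis
      using insert.hyps by (intro disjI1 exI[of _ "l(s := 0)"]) (auto intro!: sum.cong)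
  next
    case separated
    define p where "p = (\<Sum>i\<in>I. y i * a s i)"
    show ?thesis
    proof (cases "p \<ge> 0")
      case True
      then show ?thesis using separated unfolding p_def by auto
    next
      case False
      \<comment> \<open>Project along a s onto the hyperplane orthogonal to y, and apply the induction
        hypothesis to the projected problem.\<close>
      define P where "P v i = v i - (\<Sum>j\<in>I. y j * v j) / p * a s i" for v i
      from insert.IH[where a="\<lambda>t. P (a t)" and b="P b"]
      consider (cone') \<mu> where "\<forall>t\<in>S. \<mu> t \<ge> 0" "\<forall>i\<in>I. P b i = (\<Sum>t\<in>S. \<mu> t * P (a t) i)"
        | (separated') z where "\<forall>t\<in>S. (\<Sum>i\<in>I. z i * P (a t) i) \<ge> 0" "(\<Sum>i\<in>I. z i * P b i) < 0"
        by blast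
      then show ?thesis
      proof cases
        case cone'
        show ?thesis
          by (intro disjI1 cone_membership_lift[where B="\<Sum>i\<in>I. y i * b i" and Y="\<lambda>t. \<Sum>i\<in>I. y i * a t i"])
            (use insert.hyps False separated cone' in \<open>auto simp: P_def\<close>)
      next
        case separated'
        show ?thesis
          using separator_lift[where p=p and y=y and a=a and s=s and I=I, OF _ p_def] False separated'
          unfolding P_def by auto
      qed
    qed
  qed
qed

lemma exists_nontrivial_vanishing_combination:
  fixes a :: "'t \<Rightarrow> 'i \<Rightarrow> real"
  assumes "finite I" "finite S" "card I < card S"
  shows "\<exists>\<mu>. (\<exists>t\<in>S. \<mu> t \<noteq> 0) \<and> (\<forall>i\<in>I. (\<Sum>t\<in>S. \<mu> t * a t i) = 0)"
  using assms
proof (induction I arbitrary: S a rule: finite_induct)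
  case empty
  then have "S \<noteq> {}" by auto
  then show ?case by (intro exI[of _ "\<lambda>_. 1"]) auto
next
  case (insert i I)
  have "card I < card S"
    using insert.hyps insert.prems(2) by simp
  show ?case
  proof (cases "\<forall>t\<in>S. a t i = 0")
    case True
    then show ?thesis
      using insert.IH[OF insert.prems(1) \<open>card I < card S\<close>, of a] by auto
  next
    case False
    then obtain t0 where t0: "t0 \<in> S" "a t0 i \<noteq> 0" by blast
    define a' where "a' t k = a t k - a t i * (a t0 k / a t0 i)" for t k
    have "card I < card (S - {t0})"
      using insert.hyps insert.prems t0 by simp
    then obtain \<mu>' where \<mu>'_nz: "\<exists>t\<in>S - {t0}. \<mu>' t \<noteq> 0"
      and \<mu>'_van: "\<forall>k\<in>I. (\<Sum>t\<in>S - {t0}. \<mu>' t * a' t k) = 0"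
      using insert.IH[of "S - {t0}" a'] insert.prems(1) by auto
    define c where "c = - (\<Sum>t\<in>S - {t0}. \<mu>' t * a t i) / a t0 i"
    define \<mu> where "\<mu> = \<mu>'(t0 := c)"
    have split: "(\<Sum>t\<in>S. \<mu> t * a t k) = c * a t0 k + (\<Sum>t\<in>S - {t0}. \<mu>' t * a t k)" for k
      using insert.prems(1) t0(1) unfolding \<mu>_def by (simp add: sum.remove)
    have "(\<Sum>t\<in>S - {t0}. \<mu>' t * a' t k)
        = (\<Sum>t\<in>S - {t0}. \<mu>' t * a t k) - (\<Sum>t\<in>S - {t0}. \<mu>' t * a t i) * (a t0 k / a t0 i)" for k
      unfolding a'_def by (simp add: right_diff_distrib sum_subtractf sum_distrib_right sum_divide_distrib mult.assoc)
    then have "(\<Sum>t\<in>S. \<mu> t * a t k) = (\<Sum>t\<in>S - {t0}. \<mu>' t * a' t k)" for k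
      unfolding split c_def by simp
    moreover have "(\<Sum>t\<in>S. \<mu> t * a t i) = 0"
      unfolding split c_def using t0(2) by simp
    ultimately show ?thesis
      using \<mu>'_nz \<mu>'_van by (intro exI[of _ \<mu>]) (auto simp: \<mu>_def)
  qed
qed

lemma exists_ratio_step_to_boundary:
  fixes l \<nu> :: "'t \<Rightarrow> real"
  assumes "finite S" "\<forall>t\<in>S. l t \<ge> 0" "\<exists>t\<in>S. \<nu> t > 0"
  shows "\<exists>\<theta>. \<exists>t0\<in>S. (\<forall>t\<in>S. l t - \<theta> * \<nu> t \<ge> 0) \<and> l t0 - \<theta> * \<nu> t0 = 0"
proof -
  define P where "P = {t\<in>S. \<nu> t > 0}"
  have P: "finite P" "P \<noteq> {}" using assms unfolding P_def by auto
  define t0 where "t0 = arg_min_on (\<lambda>t. l t / \<nu> t) P"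
  have t0: "t0 \<in> P" and least: "\<And>t. t \<in> P \<Longrightarrow> l t0 / \<nu> t0 \<le> l t / \<nu> t"
    using arg_min_if_finite(1)[OF P] arg_min_least[OF P] unfolding t0_def by auto
  define \<theta> where "\<theta> = l t0 / \<nu> t0"
  have "\<theta> \<ge> 0" using t0 assms(2) unfolding \<theta>_def P_def by auto
  have "l t - \<theta> * \<nu> t \<ge> 0" if "t \<in> S" for t
  proof (cases "\<nu> t > 0")
    case True
    then have "\<theta> \<le> l t / \<nu> t"
      using least[of t] that unfolding \<theta>_def P_def by simp
    then show ?thesis
      using True by (simp add: pos_le_divide_eq)
  next
    case False
    then show ?thesis
      using \<open>\<theta> \<ge> 0\<close> assms(2) that by (smt (verit) mult_nonneg_nonpos)
  qed
  moreover have "l t0 - \<theta> * \<nu> t0 = 0" using t0 unfolding \<theta>_def P_def by simp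
  ultimately show ?thesis using t0 unfolding P_def by blast
qed

theorem conic_caratheodory:
  fixes a :: "'t \<Rightarrow> 'i \<Rightarrow> real"
  assumes "finite I" "finite S" "\<forall>t\<in>S. l t \<ge> 0" "\<forall>i\<in>I. b i = (\<Sum>t\<in>S. l t * a t i)"
  shows "\<exists>S' l'. S' \<subseteq> S \<and> card S' \<le> card I \<and> (\<forall>t\<in>S'. l' t > 0) \<and>
           (\<forall>i\<in>I. b i = (\<Sum>t\<in>S'. l' t * a t i))"
  using assms(2-)
proof (induction "card S" arbitrary: S l rule: less_induct)
  case less
  show ?case
  proof (cases "card S \<le> card I")
    case True
    define S' where "S' = {t\<in>S. l t > 0}"
    have "S' \<subseteq> S" "\<forall>t\<in>S'. l t > 0" unfolding S'_def by auto
    moreover have "(\<Sum>t\<in>S'. l t * a t i) = (\<Sum>t\<in>S. l t * a t i)" for i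
    proof (rule sum.mono_neutral_left[OF less.prems(1) \<open>S' \<subseteq> S\<close>])
      show "\<forall>t\<in>S - S'. l t * a t i = 0"
        using less.prems(2) unfolding S'_def by (auto simp: not_less intro: antisym)
    qed
    moreover have "card S' \<le> card S"
      using less.prems(1) \<open>S' \<subseteq> S\<close> by (rule card_mono)
    ultimately show ?thesis
      using True less.prems(3) by (intro exI[of _ S'] exI[of _ l]) auto
  next
    case False
    then have "card I < card S" by simp
    then obtain \<mu> where \<mu>_nz: "\<exists>t\<in>S. \<mu> t \<noteq> 0" and \<mu>_van: "\<forall>i\<in>I. (\<Sum>t\<in>S. \<mu> t * a t i) = 0"
      using exists_nontrivial_vanishing_combination[OF assms(1) less.prems(1)] by blast
    define \<nu> where "\<nu> = (if \<exists>t\<in>S. \<mu> t > 0 then \<mu> else (\<lambda>t. - \<mu> t))"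
    have \<nu>_pos: "\<exists>t\<in>S. \<nu> t > 0"
      using \<mu>_nz unfolding \<nu>_def by (auto simp: linorder_neq_iff)
    have \<nu>_van: "\<forall>i\<in>I. (\<Sum>t\<in>S. \<nu> t * a t i) = 0"
      using \<mu>_van unfolding \<nu>_def by (simp add: sum_negf)
    obtain \<theta> t0 where t0: "t0 \<in> S" and nonneg: "\<forall>t\<in>S. l t - \<theta> * \<nu> t \<ge> 0"
      and zero: "l t0 - \<theta> * \<nu> t0 = 0"
      using exists_ratio_step_to_boundary[OF less.prems(1,2) \<nu>_pos] by blast
    define l' where "l' t = l t - \<theta> * \<nu> t" for t
    have "(\<Sum>t\<in>S - {t0}. l' t * a t i) = (\<Sum>t\<in>S. l' t * a t i)" for i
      using less.prems(1) t0 zero unfolding l'_def by (simp add: sum.remove)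
    also have "(\<Sum>t\<in>S. l' t * a t i) = (\<Sum>t\<in>S. l t * a t i) - \<theta> * (\<Sum>t\<in>S. \<nu> t * a t i)" for i
      unfolding l'_def by (simp add: left_diff_distrib sum_subtractf sum_distrib_left mult.assoc)
    finally have rep: "\<forall>i\<in>I. b i = (\<Sum>t\<in>S - {t0}. l' t * a t i)"
      using less.prems(3) \<nu>_van by simp
    have "card (S - {t0}) < card S"
      using less.prems(1) t0 by (rule card_Diff1_less)
    moreover have "\<forall>t\<in>S - {t0}. l' t \<ge> 0" using nonneg unfolding l'_def by blast
    ultimately obtain S' l'' where "S' \<subseteq> S - {t0}" "card S' \<le> card I" "\<forall>t\<in>S'. l'' t > 0"
        "\<forall>i\<in>I. b i = (\<Sum>t\<in>S'. l'' t * a t i)"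
      using less.hyps[of "S - {t0}" l'] less.prems(1) rep by blast
    then show ?thesis by blast
  qed
qed

lemma convergent_subsequence_coordinatewise:
  fixes z :: "nat \<Rightarrow> 'i \<Rightarrow> real"
  assumes "finite I" "\<And>n i. i \<in> I \<Longrightarrow> \<bar>z n i\<bar> \<le> B"
  shows "\<exists>r. strict_mono r \<and> (\<forall>i\<in>I. \<exists>l. (\<lambda>n. z (r n) i) \<longlonglongrightarrow> l)"
  using assms
proof (induction I rule: finite_induct)
  case empty
  show ?case by (intro exI[of _ id]) (auto simp: strict_mono_def)
next
  case (insert i I)
  then obtain r1 where r1: "strict_mono r1" "\<forall>j\<in>I. \<exists>l. (\<lambda>n. z (r1 n) j) \<longlonglongrightarrow> l"
    by auto
  have "bounded (range (\<lambda>n. z (r1 n) i))"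
    using insert.prems unfolding bounded_iff by (intro exI[of _ B]) auto
  then obtain l r2 where r2: "strict_mono r2" "((\<lambda>n. z (r1 n) i) \<circ> r2) \<longlonglongrightarrow> l"
    using bounded_imp_convergent_subsequence by blast
  have "\<exists>l. (\<lambda>n. z ((r1 \<circ> r2) n) j) \<longlonglongrightarrow> l" if j: "j \<in> insert i I" for j
  proof (cases "j = i")
    case True
    then show ?thesis using r2(2) by (auto simp: o_def)
  next
    case False
    then obtain lj where "(\<lambda>n. z (r1 n) j) \<longlonglongrightarrow> lj" using r1(2) j False by auto
    from LIMSEQ_subseq_LIMSEQ[OF this r2(1)] show ?thesis by (auto simp: o_def)
  qed
  moreover have "strict_mono (r1 \<circ> r2)" using r1(1) r2(1) by (rule strict_mono_o)
  ultimately show ?case by blast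
qed

lemma exists_unit_separator:
  fixes y m :: "'i \<Rightarrow> real" and \<phi> :: "'i \<Rightarrow> 'a \<Rightarrow> real"
  assumes "finite I" "\<forall>t\<in>X. (\<Sum>i\<in>I. y i * \<phi> i t) \<ge> 0" "(\<Sum>i\<in>I. y i * m i) < 0"
  shows "\<exists>z. (\<forall>t\<in>X. (\<Sum>i\<in>I. z i * \<phi> i t) \<ge> 0) \<and> (\<Sum>i\<in>I. z i * m i) < 0 \<and>
             (\<Sum>i\<in>I. (z i)\<^sup>2) = 1"
proof -
  obtain i0 where "i0 \<in> I" "y i0 \<noteq> 0"
    using assms(3) by (metis (no_types, lifting) mult_eq_0_iff sum.neutral less_irrefl)
  then have sq_pos: "(\<Sum>i\<in>I. (y i)\<^sup>2) > 0"
    using assms(1) by (intro sum_pos2[of I i0]) auto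
  define n where "n = sqrt (\<Sum>i\<in>I. (y i)\<^sup>2)"
  have "n > 0" using sq_pos unfolding n_def by simp
  have "(\<Sum>i\<in>I. (y i / n)\<^sup>2) = (\<Sum>i\<in>I. (y i)\<^sup>2) / n\<^sup>2"
    by (simp add: power_divide sum_divide_distrib)
  also have "\<dots> = 1" using sq_pos unfolding n_def by simp
  finally show ?thesis
    using assms(2,3) \<open>n > 0\<close>
    by (intro exI[of _ "\<lambda>i. y i / n"]) (simp add: sum_divide_distrib[symmetric] divide_neg_pos)
qed

lemma limit_of_unit_separators:
  fixes z :: "nat \<Rightarrow> 'i \<Rightarrow> real" and \<phi> :: "'i \<Rightarrow> 'a \<Rightarrow> real" and m :: "'i \<Rightarrow> real"
    and X :: "nat \<Rightarrow> 'a set"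
  assumes "finite I" "mono X"
    and z_nonneg: "\<And>N. \<forall>t\<in>X N. (\<Sum>i\<in>I. z N i * \<phi> i t) \<ge> 0"
    and z_neg: "\<And>N. (\<Sum>i\<in>I. z N i * m i) < 0" and z_unit: "\<And>N. (\<Sum>i\<in>I. (z N i)\<^sup>2) = 1"
  shows "\<exists>w. (\<forall>N. \<forall>t\<in>X N. (\<Sum>i\<in>I. w i * \<phi> i t) \<ge> 0) \<and> (\<Sum>i\<in>I. w i * m i) \<le> 0 \<and>
             (\<Sum>i\<in>I. (w i)\<^sup>2) = 1"
proof -
  have "\<bar>z N i\<bar> \<le> 1" if "i \<in> I" for N i
  proof -
    have "(z N i)\<^sup>2 \<le> 1"
      using member_le_sum[of i I "\<lambda>i. (z N i)\<^sup>2"] z_unit[of N] that assms(1) by simp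
    then show ?thesis by (simp add: abs_square_le_1)
  qed
  then obtain r where r: "strict_mono r" and "\<forall>i\<in>I. \<exists>l. (\<lambda>n. z (r n) i) \<longlonglongrightarrow> l"
    using convergent_subsequence_coordinatewise[OF assms(1)] by blast
  then obtain w where w: "\<And>i. i \<in> I \<Longrightarrow> (\<lambda>n. z (r n) i) \<longlonglongrightarrow> w i"
    by metis
  have lim: "(\<lambda>n. \<Sum>i\<in>I. z (r n) i * g i) \<longlonglongrightarrow> (\<Sum>i\<in>I. w i * g i)" for g
    using w by (intro tendsto_sum tendsto_mult_right) auto
  have "(\<Sum>i\<in>I. w i * \<phi> i t) \<ge> 0" if "t \<in> X N" for N t
  proof (rule LIMSEQ_le_const[OF lim])
    have "t \<in> X (r n)" if "n \<ge> N" for n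
      using \<open>t \<in> X N\<close> monoD[OF \<open>mono X\<close>, of N "r n"] seq_suble[OF r, of n] that by auto
    then show "\<exists>N. \<forall>n\<ge>N. 0 \<le> (\<Sum>i\<in>I. z (r n) i * \<phi> i t)"
      using z_nonneg by blast
  qed
  moreover have "(\<Sum>i\<in>I. w i * m i) \<le> 0"
    using z_neg by (intro LIMSEQ_le_const2[OF lim]) (auto intro: less_imp_le)
  moreover have "(\<lambda>n. \<Sum>i\<in>I. (z (r n) i)\<^sup>2) \<longlonglongrightarrow> (\<Sum>i\<in>I. (w i)\<^sup>2)"
    using w by (intro tendsto_sum tendsto_power) auto
  then have "(\<Sum>i\<in>I. (w i)\<^sup>2) = 1"
    using z_unit by (simp add: LIMSEQ_const_iff)
  ultimately show ?thesis by blast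
qed

lemma eventually_in_cone_of_points_independent:
  fixes \<phi> :: "'i \<Rightarrow> 'a \<Rightarrow> real" and m :: "'i \<Rightarrow> real" and X :: "nat \<Rightarrow> 'a set"
  assumes "finite I" "\<And>N. finite (X N)" "mono X"
    and independent: "\<And>c. \<forall>t\<in>U. (\<Sum>i\<in>I. c i * \<phi> i t) = 0 \<Longrightarrow> \<forall>i\<in>I. c i = 0"
    and nonneg_imp_zero: "\<And>c. \<forall>N. \<forall>t\<in>X N. (\<Sum>i\<in>I. c i * \<phi> i t) \<ge> 0 \<Longrightarrow>
           (\<Sum>i\<in>I. c i * m i) \<le> 0 \<Longrightarrow> \<forall>t\<in>U. (\<Sum>i\<in>I. c i * \<phi> i t) = 0"
  shows "\<exists>N l. (\<forall>t\<in>X N. l t \<ge> 0) \<and> (\<forall>i\<in>I. m i = (\<Sum>t\<in>X N. l t * \<phi> i t))"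
proof (rule ccontr)
  assume no_cone: "\<not> ?thesis"
  have "\<exists>z. (\<forall>t\<in>X N. (\<Sum>i\<in>I. z i * \<phi> i t) \<ge> 0) \<and> (\<Sum>i\<in>I. z i * m i) < 0 \<and>
            (\<Sum>i\<in>I. (z i)\<^sup>2) = 1" for N
  proof -
    obtain y where "\<forall>t\<in>X N. (\<Sum>i\<in>I. y i * \<phi> i t) \<ge> 0" "(\<Sum>i\<in>I. y i * m i) < 0"
      using farkas_alternative[OF assms(2) assms(1), where b=m and a="\<lambda>t i. \<phi> i t"] no_cone
      by blast
    then show ?thesis by (rule exists_unit_separator[OF assms(1)])
  qed
  then have "\<exists>z. \<forall>N. (\<forall>t\<in>X N. (\<Sum>i\<in>I. z N i * \<phi> i t) \<ge> 0) \<and> (\<Sum>i\<in>I. z N i * m i) < 0 \<and>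
                 (\<Sum>i\<in>I. (z N i)\<^sup>2) = 1"
    by (intro choice allI)
  then obtain z where z_nonneg: "\<And>N. \<forall>t\<in>X N. (\<Sum>i\<in>I. z N i * \<phi> i t) \<ge> 0"
    and z_neg: "\<And>N. (\<Sum>i\<in>I. z N i * m i) < 0" and z_unit: "\<And>N. (\<Sum>i\<in>I. (z N i)\<^sup>2) = 1"
    by blast
  obtain w where w: "\<forall>N. \<forall>t\<in>X N. (\<Sum>i\<in>I. w i * \<phi> i t) \<ge> 0" "(\<Sum>i\<in>I. w i * m i) \<le> 0"
      "(\<Sum>i\<in>I. (w i)\<^sup>2) = 1"
    using limit_of_unit_separators[OF assms(1,3) z_nonneg z_neg z_unit] by blast
  then have "\<forall>i\<in>I. w i = 0"
    using nonneg_imp_zero[of w] independent[of w] by blast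
  with w(3) show False by simp
qed

lemma representation_extends_along_relation:
  fixes c m :: "'i \<Rightarrow> real" and \<phi> :: "'i \<Rightarrow> 'a \<Rightarrow> real"
  assumes "finite I" "i0 \<in> I" "c i0 \<noteq> 0"
    and "\<forall>t\<in>S. (\<Sum>i\<in>I. c i * \<phi> i t) = 0" "(\<Sum>i\<in>I. c i * m i) = 0"
    and rep: "\<forall>i\<in>I - {i0}. m i = (\<Sum>t\<in>S. l t * \<phi> i t)"
  shows "m i0 = (\<Sum>t\<in>S. l t * \<phi> i0 t)"
proof -
  define d where "d i = m i - (\<Sum>t\<in>S. l t * \<phi> i t)" for i
  have "(\<Sum>i\<in>I. c i * (\<Sum>t\<in>S. l t * \<phi> i t)) = (\<Sum>t\<in>S. l t * (\<Sum>i\<in>I. c i * \<phi> i t))"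
    unfolding sum_distrib_left by (subst sum.swap) (simp add: ac_simps)
  then have "(\<Sum>i\<in>I. c i * d i) = (\<Sum>i\<in>I. c i * m i) - (\<Sum>t\<in>S. l t * (\<Sum>i\<in>I. c i * \<phi> i t))"
    unfolding d_def by (simp add: right_diff_distrib sum_subtractf)
  also have "\<dots> = 0" using assms(4,5) by simp
  also have "(\<Sum>i\<in>I. c i * d i) = c i0 * d i0"
    using assms(1,2) rep by (simp add: sum.remove d_def)
  finally show ?thesis using assms(3) unfolding d_def by simp
qed

theorem eventually_in_cone_of_points:
  fixes \<phi> :: "'i \<Rightarrow> 'a \<Rightarrow> real" and m :: "'i \<Rightarrow> real" and X :: "nat \<Rightarrow> 'a set"
  assumes "finite I" "\<And>N. finite (X N)" "mono X" "\<And>N. X N \<subseteq> U"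
    and "\<And>c. \<forall>N. \<forall>t\<in>X N. (\<Sum>i\<in>I. c i * \<phi> i t) \<ge> 0 \<Longrightarrow>
           (\<Sum>i\<in>I. c i * m i) \<le> 0 \<Longrightarrow> \<forall>t\<in>U. (\<Sum>i\<in>I. c i * \<phi> i t) = 0"
    and "\<And>c. \<forall>t\<in>U. (\<Sum>i\<in>I. c i * \<phi> i t) = 0 \<Longrightarrow> (\<Sum>i\<in>I. c i * m i) = 0"
  shows "\<exists>N l. (\<forall>t\<in>X N. l t \<ge> 0) \<and> (\<forall>i\<in>I. m i = (\<Sum>t\<in>X N. l t * \<phi> i t))"
  using assms(1,5,6)
proof (induction I rule: finite_psubset_induct)
  case (psubset I)
  show ?case
  proof (cases "\<exists>c. \<exists>i0\<in>I. c i0 \<noteq> 0 \<and> (\<forall>t\<in>U. (\<Sum>i\<in>I. c i * \<phi> i t) = 0)")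
    case False
    show ?thesis
      by (rule eventually_in_cone_of_points_independent[OF psubset.hyps(1) assms(2,3)])
        (use False psubset.prems(1) in blast)+
  next
    case True
    then obtain c i0 where i0: "i0 \<in> I" "c i0 \<noteq> 0" and rel: "\<forall>t\<in>U. (\<Sum>i\<in>I. c i * \<phi> i t) = 0"
      by blast
    have restrict: "(\<Sum>i\<in>I. (c'(i0 := 0)) i * g i) = (\<Sum>i\<in>I - {i0}. c' i * g i)" for c' g :: "'i \<Rightarrow> real"
      using psubset.hyps(1) i0(1) by (intro sum.mono_neutral_cong_right) auto
    have "\<forall>t\<in>U. (\<Sum>i\<in>I - {i0}. c' i * \<phi> i t) = 0"
      if "\<forall>N. \<forall>t\<in>X N. (\<Sum>i\<in>I - {i0}. c' i * \<phi> i t) \<ge> 0" "(\<Sum>i\<in>I - {i0}. c' i * m i) \<le> 0" for c'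
      using psubset.prems(1)[of "c'(i0 := 0)"] that unfolding restrict by blast
    moreover have "(\<Sum>i\<in>I - {i0}. c' i * m i) = 0"
      if "\<forall>t\<in>U. (\<Sum>i\<in>I - {i0}. c' i * \<phi> i t) = 0" for c'
      using psubset.prems(2)[of "c'(i0 := 0)"] that unfolding restrict by blast
    moreover have "I - {i0} \<subset> I" using i0(1) by blast
    ultimately obtain N l where l: "\<forall>t\<in>X N. l t \<ge> 0"
      and rep: "\<forall>i\<in>I - {i0}. m i = (\<Sum>t\<in>X N. l t * \<phi> i t)"
      using psubset.IH by blast
    have "\<forall>t\<in>X N. (\<Sum>i\<in>I. c i * \<phi> i t) = 0" using rel assms(4) by blast
    then have "m i0 = (\<Sum>t\<in>X N. l t * \<phi> i0 t)"
      using representation_extends_along_relation[OF psubset.hyps(1) i0 _ psubset.prems(2)[OF rel] rep]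
      by blast
    then show ?thesis using l rep by (intro exI[of _ N] exI[of _ l]) blast
  qed
qed

lemma integral_pos_if_pos_on_ball:
  fixes g :: "'a::euclidean_space \<Rightarrow> real"
  assumes g: "g absolutely_integrable_on S" and nonneg: "\<forall>s\<in>S. g s \<ge> 0"
    and sub: "ball a r \<subseteq> S" and "r > 0" and pos: "\<forall>s\<in>ball a r. g s > 0"
  shows "integral S g > 0"
proof -
  have ball: "ball a r \<in> sets lebesgue" by (simp add: fmeasurableD lmeasurable_ball)
  have g_ball: "g absolutely_integrable_on ball a r"
    using set_integrable_subset[OF g ball sub] by simp
  have "g integrable_on S" "g integrable_on ball a r"
    using g g_ball by (simp_all add: set_lebesgue_integral_eq_integral(1))
  then have "integral (ball a r) g \<le> integral S g"
    using integral_subset_le[OF sub _ _ nonneg] by blast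
  moreover have "integral (ball a r) g \<ge> 0"
    using pos \<open>g integrable_on ball a r\<close> by (intro integral_nonneg) (auto simp: less_imp_le)
  moreover have "integral (ball a r) g \<noteq> 0"
  proof
    assume zero: "integral (ball a r) g = 0"
    have int: "integrable lebesgue (\<lambda>s. indicator (ball a r) s * g s)"
      using g_ball by (simp add: set_integrable_def)
    have "(LINT s:ball a r | lebesgue. indicator (ball a r) s * g s) = (LINT s:ball a r | lebesgue. g s)"
      unfolding set_lebesgue_integral_def
      by (intro Bochner_Integration.integral_cong) (auto simp: indicator_def)
    also have "\<dots> = 0"
      using set_lebesgue_integral_eq_integral(2)[OF g_ball] zero by simp
    finally have "(LINT s:ball a r | lebesgue. indicator (ball a r) s * g s) = 0" .
    moreover have "AE s\<in>ball a r in lebesgue. indicator (ball a r) s * g s > 0"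
      using pos by (intro AE_I2) auto
    ultimately have "ball a r \<in> null_sets lebesgue"
      using null_if_pos_func_has_zero_int[OF int ball] by blast
    then show False
      using open_not_negligible[of "ball a r"] \<open>r > 0\<close> by (simp add: negligible_iff_null_sets)
  qed
  ultimately show ?thesis by linarith
qed

lemma equidistributed_in_hits_ball:
  fixes x :: "nat \<Rightarrow> 'a::euclidean_space"
  assumes equi: "equidistributed_in x \<Omega>" and \<Omega>: "\<Omega> \<in> lmeasurable"
    and ball: "ball t r \<subseteq> \<Omega>" and "r > 0"
  shows "\<exists>n\<ge>1. x n \<in> ball t r"
proof (rule ccontr)
  assume miss: "\<not> (\<exists>n\<ge>1. x n \<in> ball t r)"
  define g where "g s = max 0 (r - dist s t)" for s
  have g_cont: "continuous_on UNIV g" unfolding g_def by (intro continuous_intros)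
  have g_bounded: "norm (g s) \<le> r" for s unfolding g_def using \<open>r > 0\<close> by simp
  have g_meas: "g \<in> borel_measurable (lebesgue_on \<Omega>)"
    using continuous_imp_measurable_on_sets_lebesgue[OF continuous_on_subset[OF g_cont]]
      fmeasurableD[OF \<Omega>] by blast
  have "bounded (g ` \<Omega>)" unfolding bounded_iff using g_bounded by blast
  moreover have "continuous (at s within \<Omega>) g" for s
    using g_cont by (simp add: continuous_on_eq_continuous_at continuous_at_imp_continuous_at_within)
  ultimately have lim: "(\<lambda>N. measure lebesgue \<Omega> / real N * (\<Sum>n=1..N. g (x n))) \<longlonglongrightarrow> integral \<Omega> g"
    using equi g_meas unfolding equidistributed_in_def by blast
  have "g (x n) = 0" if "n \<ge> 1" for n
  proof -
    have "x n \<notin> ball t r" using miss that by blast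
    then show ?thesis unfolding g_def by (simp add: dist_commute)
  qed
  then have "(\<Sum>n=1..N. g (x n)) = 0" for N by (intro sum.neutral) simp
  then have "integral \<Omega> g = 0"
    using lim by (simp add: LIMSEQ_const_iff)
  moreover have "integral \<Omega> g > 0"
  proof (rule integral_pos_if_pos_on_ball[OF _ _ ball \<open>r > 0\<close>])
    show "g absolutely_integrable_on \<Omega>"
      using measurable_bounded_by_integrable_imp_absolutely_integrable[OF g_meas
          fmeasurableD[OF \<Omega>] integrable_on_const[OF \<Omega>]] g_bounded
      by blast
    show "\<forall>s\<in>\<Omega>. g s \<ge> 0" unfolding g_def by simp
    show "\<forall>s\<in>ball t r. g s > 0" unfolding g_def by (simp add: dist_commute)
  qed
  ultimately show False by simp
qed

lemma integral_mult_pos_if_pos_at: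
  fixes \<omega> f :: "'a::euclidean_space \<Rightarrow> real"
  assumes "open U" "continuous_on U f" "(\<lambda>s. \<omega> s * f s) absolutely_integrable_on U"
    and \<omega>: "\<forall>s\<in>U. \<omega> s \<ge> 0" and f: "\<forall>s\<in>U. f s \<ge> 0"
    and nowhere_dense: "interior (closure {s\<in>U. \<omega> s = 0}) = {}"
    and "t \<in> U" "f t > 0"
  shows "integral U (\<lambda>s. \<omega> s * f s) > 0"
proof -
  define Z where "Z = closure {s\<in>U. \<omega> s = 0}"
  have "open (U \<inter> f -` {0<..})"
    using continuous_open_preimage[OF assms(2,1)] by simp
  moreover have "t \<in> U \<inter> f -` {0<..}" using assms(7,8) by simp
  ultimately obtain r where "r > 0" and r: "ball t r \<subseteq> U \<inter> f -` {0<..}"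
    by (meson openE)
  have "\<not> ball t r \<subseteq> Z"
    using interior_maximal[of "ball t r" Z] nowhere_dense \<open>r > 0\<close> unfolding Z_def by auto
  then obtain s where s: "s \<in> ball t r - Z" by blast
  moreover have "open (ball t r - Z)" unfolding Z_def by (simp add: open_Diff)
  ultimately obtain r' where "r' > 0" and r': "ball s r' \<subseteq> ball t r - Z"
    by (meson openE)
  have "\<omega> s' * f s' > 0" if "s' \<in> ball s r'" for s'
  proof -
    have "s' \<in> U \<inter> f -` {0<..}" "s' \<notin> Z" using that r r' by blast+
    then have "s' \<in> U" "f s' > 0" "s' \<notin> Z" by auto
    then have "\<omega> s' \<noteq> 0" using closure_subset[of "{s\<in>U. \<omega> s = 0}"] unfolding Z_def by blast
    then show ?thesis using \<omega> \<open>s' \<in> U\<close> \<open>f s' > 0\<close> by (simp add: less_le)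
  qed
  moreover have "ball s r' \<subseteq> U" using r r' by blast
  moreover have "\<forall>s\<in>U. \<omega> s * f s \<ge> 0" using \<omega> f by simp
  ultimately show ?thesis
    by (intro integral_pos_if_pos_on_ball[OF assms(3) _ _ \<open>r' > 0\<close>]) auto
qed

lemma zero_if_nonneg_on_dense_and_integral_nonpos:
  fixes \<omega> f :: "'a::euclidean_space \<Rightarrow> real"
  assumes "open U" "U \<subseteq> closure D" "\<forall>d\<in>D. f d \<ge> 0" "continuous_on U f"
    and "(\<lambda>s. \<omega> s * f s) absolutely_integrable_on U" "\<forall>s\<in>U. \<omega> s \<ge> 0"
    and "interior (closure {s\<in>U. \<omega> s = 0}) = {}"
    and "integral U (\<lambda>s. \<omega> s * f s) \<le> 0"
  shows "\<forall>t\<in>U. f t = 0"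
proof -
  have nonneg: "f t \<ge> 0" if "t \<in> U" for t
  proof (rule ccontr)
    assume "\<not> f t \<ge> 0"
    then have "t \<in> (U \<inter> f -` {..<0}) \<inter> closure D"
      using that assms(2) by auto
    moreover have "open (U \<inter> f -` {..<0})"
      using continuous_open_preimage[OF assms(4,1)] by simp
    ultimately obtain d where "d \<in> D" "f d < 0"
      using open_Int_closure_eq_empty by blast
    then show False using assms(3) by fastforce
  qed
  show ?thesis
  proof (intro ballI antisym)
    fix t assume "t \<in> U"
    show "f t \<le> 0"
      using integral_mult_pos_if_pos_at[OF assms(1,4,5,6) _ assms(7) \<open>t \<in> U\<close>] nonneg assms(8)
      by (meson linorder_not_le)
  qed (use nonneg in blast)
qed

lemma absolutely_integrable_mult_continuous:
  fixes \<omega> f :: "'a::euclidean_space \<Rightarrow> real"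
  assumes "compact \<Omega>" "\<omega> absolutely_integrable_on \<Omega>" "continuous_on \<Omega> f"
  shows "(\<lambda>t. \<omega> t * f t) absolutely_integrable_on \<Omega>"
proof -
  have "bounded (f ` \<Omega>)"
    using compact_continuous_image[OF assms(3,1)] by (rule compact_imp_bounded)
  moreover have "f \<in> borel_measurable (lebesgue_on \<Omega>)"
    using continuous_imp_measurable_on_sets_lebesgue[OF assms(3)] assms(1)
    by (simp add: fmeasurableD lmeasurable_compact)
  ultimately have "(\<lambda>t. f t * \<omega> t) absolutely_integrable_on \<Omega>"
    using absolutely_integrable_bounded_measurable_product[OF bilinear_times _ _ _ assms(2)] assms(1)
    by (simp add: fmeasurableD lmeasurable_compact)
  then show ?thesis by (simp add: mult.commute)
qed

lemma integral_mult_sum: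
  fixes \<omega> :: "'a::euclidean_space \<Rightarrow> real" and \<phi> :: "'i \<Rightarrow> 'a \<Rightarrow> real"
  assumes "finite I" "\<And>i. i \<in> I \<Longrightarrow> (\<lambda>t. \<omega> t * \<phi> i t) integrable_on S"
  shows "integral S (\<lambda>t. \<omega> t * (\<Sum>i\<in>I. c i * \<phi> i t)) = (\<Sum>i\<in>I. c i * integral S (\<lambda>t. \<omega> t * \<phi> i t))"
proof -
  have "integral S (\<lambda>t. \<omega> t * (\<Sum>i\<in>I. c i * \<phi> i t)) = integral S (\<lambda>t. \<Sum>i\<in>I. c i * (\<omega> t * \<phi> i t))"
    by (simp add: sum_distrib_left mult.left_commute)
  also have "\<dots> = (\<Sum>i\<in>I. c i * integral S (\<lambda>t. \<omega> t * \<phi> i t))"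
    using assms by (subst integral_sum) (auto intro: integrable_on_mult_right)
  finally show ?thesis .
qed

lemma equidistributed_in_dense_in_interior:
  fixes x :: "nat \<Rightarrow> 'a::euclidean_space"
  assumes "equidistributed_in x \<Omega>" "\<Omega> \<in> lmeasurable"
  shows "interior \<Omega> \<subseteq> closure {x n |n. n \<ge> 1 \<and> x n \<in> interior \<Omega>}"
proof
  fix t assume "t \<in> interior \<Omega>"
  then obtain r where "r > 0" and r: "ball t r \<subseteq> interior \<Omega>"
    using open_interior openE by blast
  show "t \<in> closure {x n |n. n \<ge> 1 \<and> x n \<in> interior \<Omega>}"
    unfolding closure_approachable
  proof (intro allI impI)
    fix e :: real assume "e > 0"
    have ball: "ball t (min e r) \<subseteq> interior \<Omega>" using r by auto
    then obtain n where "n \<ge> 1" "x n \<in> ball t (min e r)"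
      using equidistributed_in_hits_ball[OF assms] interior_subset[of \<Omega>] \<open>e > 0\<close> \<open>r > 0\<close>
      by force
    then have "x n \<in> interior \<Omega>" "dist (x n) t < e"
      using ball by (auto simp: dist_commute)
    then show "\<exists>y\<in>{x n |n. n \<ge> 1 \<and> x n \<in> interior \<Omega>}. dist y t < e"
      using \<open>n \<ge> 1\<close> by blast
  qed
qed

lemma integral_interior_eq:
  fixes g :: "'a::euclidean_space \<Rightarrow> 'b::banach"
  assumes "negligible (frontier S)"
  shows "integral (interior S) g = integral S g"
proof (rule integral_spike_set)
  have "S - interior S \<subseteq> frontier S" unfolding frontier_def using closure_subset by blast
  then have "negligible (S - interior S)" by (rule negligible_subset[OF assms])
  then show "negligible {s \<in> S - interior S. g s \<noteq> 0}" by (rule negligible_subset) blast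
  have "{s \<in> interior S - S. g s \<noteq> 0} = {}" using interior_subset by blast
  then show "negligible {s \<in> interior S - S. g s \<noteq> 0}" by (metis negligible_empty)
qed

lemma exact_on_span_if_exact_on_basis:
  fixes \<omega> :: "'a::euclidean_space \<Rightarrow> real" and \<phi> :: "'i \<Rightarrow> 'a \<Rightarrow> real"
  assumes "finite I" "\<And>i. i \<in> I \<Longrightarrow> (\<lambda>t. \<omega> t * \<phi> i t) integrable_on \<Omega>"
    and rep: "\<forall>i\<in>I. integral \<Omega> (\<lambda>t. \<omega> t * \<phi> i t) = (\<Sum>t\<in>S. l t * \<phi> i t)"
    and "S \<subseteq> \<Omega>" and f: "\<forall>t\<in>\<Omega>. f t = (\<Sum>i\<in>I. c i * \<phi> i t)"
  shows "(\<Sum>t\<in>S. l t * f t) = integral \<Omega> (\<lambda>t. \<omega> t * f t)"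
proof -
  have "(\<Sum>t\<in>S. l t * f t) = (\<Sum>t\<in>S. l t * (\<Sum>i\<in>I. c i * \<phi> i t))"
    using f \<open>S \<subseteq> \<Omega>\<close> by (intro sum.cong) auto
  also have "\<dots> = (\<Sum>i\<in>I. c i * (\<Sum>t\<in>S. l t * \<phi> i t))"
    unfolding sum_distrib_left by (subst sum.swap) (simp add: ac_simps)
  also have "\<dots> = integral \<Omega> (\<lambda>t. \<omega> t * (\<Sum>i\<in>I. c i * \<phi> i t))"
    using rep integral_mult_sum[OF assms(1,2)] by simp
  also have "\<dots> = integral \<Omega> (\<lambda>t. \<omega> t * f t)"
    using f by (intro integral_cong) simp
  finally show ?thesis .
qed

lemma moments_in_cone_of_sample_points:
  fixes \<Omega> :: "'a::euclidean_space set" and \<omega> :: "'a \<Rightarrow> real" and \<phi> :: "'i \<Rightarrow> 'a \<Rightarrow> real"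
    and x :: "nat \<Rightarrow> 'a"
  assumes "compact \<Omega>" "frontier \<Omega> \<in> null_sets lebesgue"
    and "\<omega> absolutely_integrable_on \<Omega>" "\<forall>t\<in>\<Omega>. \<omega> t \<ge> 0"
    and nowhere_dense: "interior (closure {t\<in>\<Omega>. \<omega> t = 0}) = {}"
    and "finite I" "\<forall>i\<in>I. continuous_on \<Omega> (\<phi> i)" and equi: "equidistributed_in x \<Omega>"
  shows "\<exists>N S l. S \<subseteq> x ` {1..N} \<and> card S \<le> card I \<and> (\<forall>t\<in>S. l t > 0) \<and>
           (\<forall>i\<in>I. integral \<Omega> (\<lambda>t. \<omega> t * \<phi> i t) = (\<Sum>t\<in>S. l t * \<phi> i t))"
proof -
  define U where "U = interior \<Omega>"
  define X where "X N = x ` {n\<in>{1..N}. x n \<in> U}" for N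
  define m where "m i = integral \<Omega> (\<lambda>t. \<omega> t * \<phi> i t)" for i
  define E where "E c t = (\<Sum>i\<in>I. c i * \<phi> i t)" for c t
  have E_cont: "continuous_on \<Omega> (E c)" for c
    unfolding E_def using assms(7) by (intro continuous_intros) auto
  have U_sub: "U \<subseteq> \<Omega>" unfolding U_def by (rule interior_subset)
  have "U \<in> sets lebesgue"
    using lmeasurable_open[OF bounded_subset[OF compact_imp_bounded[OF assms(1)] U_sub]]
    unfolding U_def by (simp add: fmeasurableD)
  then have \<omega>E: "(\<lambda>t. \<omega> t * E c t) absolutely_integrable_on U" for c
    using set_integrable_subset[OF absolutely_integrable_mult_continuous[OF assms(1,3) E_cont]] U_sub
    by blast
  have \<omega>\<phi>: "(\<lambda>t. \<omega> t * \<phi> i t) integrable_on \<Omega>" if "i \<in> I" for i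
    using absolutely_integrable_mult_continuous[OF assms(1,3)] assms(7) that
    by (simp add: set_lebesgue_integral_eq_integral(1))
  have integral_U: "integral U g = integral \<Omega> g" for g :: "'a \<Rightarrow> real"
    unfolding U_def using assms(2) by (intro integral_interior_eq) (simp add: negligible_iff_null_sets)
  have moment: "integral U (\<lambda>t. \<omega> t * E c t) = (\<Sum>i\<in>I. c i * m i)" for c
    unfolding integral_U E_def m_def using integral_mult_sum[OF assms(6) \<omega>\<phi>] .
  have dense: "U \<subseteq> closure {x n |n. n \<ge> 1 \<and> x n \<in> U}"
    unfolding U_def by (rule equidistributed_in_dense_in_interior[OF equi lmeasurable_compact[OF assms(1)]])
  have "\<exists>N l. (\<forall>t\<in>X N. l t \<ge> 0) \<and> (\<forall>i\<in>I. m i = (\<Sum>t\<in>X N. l t * \<phi> i t))"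
  proof (rule eventually_in_cone_of_points[OF assms(6)])
    show "finite (X N)" "X N \<subseteq> U" for N unfolding X_def by auto
    show "mono X" unfolding X_def mono_def by auto
  next
    fix c assume nonneg: "\<forall>N. \<forall>t\<in>X N. (\<Sum>i\<in>I. c i * \<phi> i t) \<ge> 0"
      and nonpos: "(\<Sum>i\<in>I. c i * m i) \<le> 0"
    have "\<forall>t\<in>U. E c t = 0"
    proof (rule zero_if_nonneg_on_dense_and_integral_nonpos[OF _ dense _ _ \<omega>E])
      show "open U" unfolding U_def by simp
      have "x n \<in> X n" if "n \<ge> 1" "x n \<in> U" for n using that unfolding X_def by auto
      then show "\<forall>d\<in>{x n |n. n \<ge> 1 \<and> x n \<in> U}. E c d \<ge> 0"
        using nonneg unfolding E_def by blast
      show "continuous_on U (E c)" using E_cont U_sub by (rule continuous_on_subset)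
      show "\<forall>s\<in>U. \<omega> s \<ge> 0" using assms(4) U_sub by blast
      show "interior (closure {s\<in>U. \<omega> s = 0}) = {}"
        using nowhere_dense interior_mono[OF closure_mono[of "{s\<in>U. \<omega> s = 0}" "{t\<in>\<Omega>. \<omega> t = 0}"]]
          U_sub by blast
      show "integral U (\<lambda>s. \<omega> s * E c s) \<le> 0" using moment nonpos by simp
    qed
    then show "\<forall>t\<in>U. (\<Sum>i\<in>I. c i * \<phi> i t) = 0" unfolding E_def .
  next
    fix c assume "\<forall>t\<in>U. (\<Sum>i\<in>I. c i * \<phi> i t) = 0"
    then have "integral U (\<lambda>t. \<omega> t * E c t) = integral U (\<lambda>t. 0)"
      unfolding E_def by (intro integral_cong) simp
    then show "(\<Sum>i\<in>I. c i * m i) = 0" using moment by simp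
  qed
  then obtain N l where l: "\<forall>t\<in>X N. l t \<ge> 0" and rep: "\<forall>i\<in>I. m i = (\<Sum>t\<in>X N. l t * \<phi> i t)"
    by blast
  have "finite (X N)" unfolding X_def by simp
  then obtain S l' where "S \<subseteq> X N" "card S \<le> card I" "\<forall>t\<in>S. l' t > 0"
      "\<forall>i\<in>I. m i = (\<Sum>t\<in>S. l' t * \<phi> i t)"
    using conic_caratheodory[OF assms(6) _ l rep] by blast
  moreover have "X N \<subseteq> x ` {1..N}" unfolding X_def by auto
  ultimately show ?thesis unfolding m_def by blast
qed

theorem mainTheorem8:
  fixes \<Omega> :: "'a::euclidean_space set"
    and \<omega> :: "'a \<Rightarrow> real"
    and F :: "('a \<Rightarrow> real) set"
    and K :: nat
    and x :: "nat \<Rightarrow> 'a"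
  assumes "compact \<Omega>"
    and "measure lebesgue \<Omega> > 0"
    and "frontier \<Omega> \<in> null_sets lebesgue"
    and "\<forall>t\<in>\<Omega>. \<omega> t \<ge> 0"
    and "riemann_integrable_on \<omega> \<Omega>"
    and "interior (closure {t\<in>\<Omega>. \<omega> t = 0}) = {}"
    and "fun_space_on \<Omega> K F"
    and "\<forall>c::real. (\<lambda>t. c) \<in> F"
    and "\<forall>f\<in>F. (\<forall>t\<in>\<Omega>. f t \<ge> 0) \<and> (\<exists>t\<in>\<Omega>. f t \<noteq> 0)
               \<longrightarrow> integral \<Omega> (\<lambda>t. \<omega> t * f t) > 0"
    and "equidistributed_in x \<Omega>"
  shows "\<exists>(N::nat) (M::nat) (y::nat \<Rightarrow> 'a) (lam::nat \<Rightarrow> real).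
           M \<le> K \<and> (\<forall>j<M. y j \<in> x ` {1..N}) \<and> (\<forall>j<M. lam j > 0) \<and>
           (\<forall>f\<in>F. (\<Sum>j<M. lam j * f (y j)) = integral \<Omega> (\<lambda>t. \<omega> t * f t))"
proof -
  obtain \<phi> where \<phi>: "\<forall>i<K. continuous_on \<Omega> (\<phi> i)"
    and F: "F = {f. \<exists>c. \<forall>t\<in>\<Omega>. f t = (\<Sum>i<K. c i * \<phi> i t)}"
    using assms(7) unfolding fun_space_on_def by blast
  have "\<Omega> \<noteq> {}" using assms(2) by auto
  moreover have "(\<lambda>t. 1) \<in> F" using assms(8) by blast
  ultimately have "integral \<Omega> (\<lambda>t. \<omega> t * 1) > 0" using assms(9)[rule_format, of "\<lambda>t. 1"] by auto
  then have \<omega>: "\<omega> absolutely_integrable_on \<Omega>"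
    using assms(4) not_integrable_integral nonnegative_absolutely_integrable_1 by fastforce
  have \<phi>_cont: "\<forall>i\<in>{..<K}. continuous_on \<Omega> (\<phi> i)" using \<phi> by simp
  obtain N S l where S: "S \<subseteq> x ` {1..N}" "card S \<le> K" "\<forall>t\<in>S. l t > 0"
    and rep: "\<forall>i\<in>{..<K}. integral \<Omega> (\<lambda>t. \<omega> t * \<phi> i t) = (\<Sum>t\<in>S. l t * \<phi> i t)"
    using moments_in_cone_of_sample_points[OF assms(1,3) \<omega> assms(4,6) finite_lessThan \<phi>_cont assms(10)]
    by auto
  have "S \<subseteq> \<Omega>" using S(1) assms(10) unfolding equidistributed_in_def by auto
  obtain y where y: "bij_betw y {..<card S} S"
    using ex_bij_betw_nat_finite[of S] finite_subset[OF S(1)] by (auto simp: atLeast0LessThan)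
  show ?thesis
  proof (intro exI conjI)
    show "card S \<le> K" by (rule S(2))
    show "\<forall>j<card S. y j \<in> x ` {1..N}" "\<forall>j<card S. l (y j) > 0"
      using y S(1,3) unfolding bij_betw_def by auto
    show "\<forall>f\<in>F. (\<Sum>j<card S. l (y j) * f (y j)) = integral \<Omega> (\<lambda>t. \<omega> t * f t)"
    proof
      fix f assume "f \<in> F"
      then obtain c where c: "\<forall>t\<in>\<Omega>. f t = (\<Sum>i<K. c i * \<phi> i t)" using F by blast
      have "(\<Sum>j<card S. l (y j) * f (y j)) = (\<Sum>t\<in>S. l t * f t)"
        by (rule sum.reindex_bij_betw[OF y])
      also have "\<dots> = integral \<Omega> (\<lambda>t. \<omega> t * f t)"
        using absolutely_integrable_mult_continuous[OF assms(1) \<omega>] \<phi>_cont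
        by (intro exact_on_span_if_exact_on_basis[OF finite_lessThan _ rep \<open>S \<subseteq> \<Omega>\<close> c])
          (simp add: set_lebesgue_integral_eq_integral(1))
      finally show "(\<Sum>j<card S. l (y j) * f (y j)) = integral \<Omega> (\<lambda>t. \<omega> t * f t)" .
    qed
  qed
qed

end
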